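(* Let $\mathbf x_\alpha$ and $\mathbf y_\beta$ be distinct variables, $\mathbf A_\alpha$ and $\mathbf B_\gamma$ expressions, and suppose that either (1) $\mathbf A_\alpha$ is eval-free and $\mathbf y_\beta$ is not free in $\mathbf A_\alpha$, or (2) $\mathbf B_\gamma$ is eval-free and $\mathbf x_\alpha$ is not free in $\mathbf B_\gamma$. Then $(\lambda\mathbf x_\alpha.\lambda\mathbf y_\beta.\mathbf B_\gamma)\,\mathbf A_\alpha=\lambda\mathbf y_\beta.((\lambda\mathbf x_\alpha.\mathbf B_\gamma)\,\mathbf A_\alpha)$ is valid in CTT$_{\rm qe}$.
   Context: The logic CTT$_{\rm qe}$. Types: $\iota$ (individuals), $o$ (truth values), $\epsilon$ (constructions), and $(\alpha\to\beta)$ for types $\alpha,\beta$. Let $\mathcal V$ be a set of typed symbols (variables) containing denumerably many symbols $\mathbf{x}_\alpha$ of each type $\alpha$, and $\mathcal C$ a disjoint set of typed symbols (constants) containing the logical constants $=_{\alpha\to\alpha\to o}$ (each $\alpha$), $\mathsf{is\text{-}var}_{\epsilon\to o}$, $\mathsf{is\text{-}var}^\alpha_{\epsilon\to o}$, $\mathsf{is\text{-}con}_{\epsilon\to o}$, $\mathsf{is\text{-}con}^\alpha_{\epsilon\to o}$, $\mathsf{app}_{\epsilon\to\epsilon\to\epsilon}$, $\mathsf{abs}_{\epsilon\to\epsilon\to\epsilon}$, $\mathsf{quo}_{\epsilon\to\epsilon}$, $\mathsf{is\text{-}expr}_{\epsilon\to o}$, $\mathsf{is\text{-}expr}^\alpha_{\epsilon\to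 o}$ (each $\alpha$), $\sqsubset_{\epsilon\to\epsilon\to o}$, $\mathsf{is\text{-}free\text{-}in}_{\epsilon\to\epsilon\to o}$. Expressions $\mathbf{A}_\alpha$ (subscript = type) are defined inductively: (1) a variable $\mathbf{x}_\alpha$; (2) a constant $\mathbf{c}_\alpha$; (3) application $(\mathbf{F}_{\alpha\to\beta}\,\mathbf{A}_\alpha)$ of type $\beta$; (4) abstraction $(\lambda\mathbf{x}_\alpha.\mathbf{B}_\beta)$ of type $\alpha\to\beta$; (5) quotation $\ulcorner\mathbf{A}_\alpha\urcorner$ of type $\epsilon$, formed only if $\mathbf{A}_\alpha$ is eval-free; (6) evaluation $[\![\mathbf{A}_\epsilon]\!]_{\mathbf{B}_\beta}$ of type $\beta$, written $[\![\mathbf{A}_\epsilon]\!]_\beta$ (the second component only fixes the type). An expression is eval-free if built using rules (1)–(5) only. A formula is an expression of type $o$. In an eval-free expression, an occurrence of a variable $\mathbf{x}_\alpha$ is free if it is not inside a quotation and not inside a subexpression of the form $\lambda\mathbf{x}_\alpha.\mathbf{C}$; $\mathbf{x}_\alpha$ is free in $\mathbf{B}$ if it has a free occurrence there. Constructions: the smallest set of expressions of type $\epsilon$ containing all $\ulcorner\mathbf{x}_\alpha\urcorner$ and $\ulcorner\mathbf{c}_\alpha\urcorner$ and closed under forming $\mathsf{app}\,\mathbf{A}_\epsilon\,\mathbf{B}_\epsilon$, $\mathsf{abs}\,\mathbf{A}_\epsilon\,\mathbf{B}_\epsilon$, $\mathsf{quo}\,\mathbf{A}_\epsilon$. The injective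 map $\mathcal E$ from eval-free expressions to constructions: $\mathcal E(\mathbf{x}_\alpha)=\ulcorner\mathbf{x}_\alpha\urcorner$, $\mathcal E(\mathbf{c}_\alpha)=\ulcorner\mathbf{c}_\alpha\urcorner$, $\mathcal E(\mathbf{F}\,\mathbf{A})=\mathsf{app}\,\mathcal E(\mathbf F)\,\mathcal E(\mathbf A)$, $\mathcal E(\lambda\mathbf{x}_\alpha.\mathbf B)=\mathsf{abs}\,\mathcal E(\mathbf x_\alpha)\,\mathcal E(\mathbf B)$, $\mathcal E(\ulcorner\mathbf A\urcorner)=\mathsf{quo}\,\mathcal E(\mathbf A)$. Abbreviations: $\mathbf A_\alpha=\mathbf B_\alpha$ is $=_{\alpha\to\alpha\to o}\mathbf A_\alpha\mathbf B_\alpha$; $T_o$ is $(=_{o\to o\to o}\,=\,=_{o\to o\to o})$; $F_o$ is $(\lambda x_o.T_o)=(\lambda x_o.x_o)$; $\forall\mathbf x_\alpha.\mathbf A_o$ is $(\lambda\mathbf x_\alpha.T_o)=(\lambda\mathbf x_\alpha.\mathbf A_o)$; $\neg\mathbf A_o$ is $=_{o\to o\to o}F_o\,\mathbf A_o$; $\exists\mathbf x_\alpha.\mathbf A_o$ is $\neg\forall\mathbf x_\alpha.\neg\mathbf A_o$; $\mathbf A\neq\mathbf B$ is $\neg(\mathbf A=\mathbf B)$; $\mathsf{IS\text{-}EFFECTIVE\text{-}IN}(\mathbf x_\alpha,\mathbf B_\beta)$ is $\exists\mathbf y_\alpha.((\lambda\mathbf x_\alpha.\mathbf B_\beta)\,\mathbf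 y_\alpha\neq\mathbf B_\beta)$ for a variable $\mathbf y_\alpha$ distinct from $\mathbf x_\alpha$. Semantics. A frame is $\{D_\alpha\}$ with $D_\iota$ nonempty, $D_o=\{\mathrm T,\mathrm F\}$, $D_\epsilon$ the set of all constructions, and $D_{\alpha\to\beta}$ some set of total functions $D_\alpha\to D_\beta$. An interpretation $(\{D_\alpha\},I)$ has $I(\mathbf c_\alpha)\in D_\alpha$ for each constant, with: $I(=_{\alpha\to\alpha\to o})$ the (curried) identity relation on $D_\alpha$; $I(\mathsf{is\text{-}var})(A)=\mathrm T$ iff $A=\ulcorner\mathbf x_\beta\urcorner$ for some variable of some type; $I(\mathsf{is\text{-}var}^\alpha)(A)=\mathrm T$ iff $A=\ulcorner\mathbf x_\alpha\urcorner$ for some variable of type $\alpha$; likewise $\mathsf{is\text{-}con}$, $\mathsf{is\text{-}con}^\alpha$ with constants; $I(\mathsf{app})(A)(B)$, $I(\mathsf{abs})(A)(B)$, $I(\mathsf{quo})(A)$ are the constructions $\mathsf{app}\,A\,B$, $\mathsf{abs}\,A\,B$, $\mathsf{quo}\,A$; $I(\mathsf{is\text{-}expr})(A)=\mathrm T$ iff $A=\mathcal E(\mathbf B_\beta)$ for some eval-free $\mathbf B_\beta$ of some type; $I(\mathsf{is\text{-}expr}^\alpha)(A)=\mathrm T$ iff $A=\mathcal E(\mathbf B_\alpha)$ for some eval-free $\mathbf B_\alpha$; $I(\sqsubset)(A)(B)=\mathrm T$ iff $A$ is a proper subexpression of $B$; $I(\mathsf{is\text{-}free\text{-}in})(A)(B)=\mathrm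 T$ iff $A=\ulcorner\mathbf x_\alpha\urcorner$, $B=\mathcal E(\mathbf C_\beta)$ for some eval-free $\mathbf C_\beta$, and $\mathbf x_\alpha$ is free in $\mathbf C_\beta$. An assignment $\phi$ maps each $\mathbf x_\alpha\in\mathcal V$ into $D_\alpha$; $\phi[\mathbf x_\alpha\mapsto d]$ is the usual modification. A general model is an interpretation $\mathcal M$ for which there is a valuation $V^{\mathcal M}_\phi(\mathbf C_\gamma)\in D_\gamma$ (for all $\phi$ and all expressions) with: (V1) $V_\phi(\mathbf x_\alpha)=\phi(\mathbf x_\alpha)$; (V2) $V_\phi(\mathbf c_\alpha)=I(\mathbf c_\alpha)$; (V3) $V_\phi(\mathbf F\,\mathbf A)=V_\phi(\mathbf F)(V_\phi(\mathbf A))$; (V4) $V_\phi(\lambda\mathbf x_\alpha.\mathbf B_\beta)$ is the $f\in D_{\alpha\to\beta}$ with $f(d)=V_{\phi[\mathbf x_\alpha\mapsto d]}(\mathbf B_\beta)$; (V5) $V_\phi(\ulcorner\mathbf A_\alpha\urcorner)=\mathcal E(\mathbf A_\alpha)$; (V6) if $V_\phi(\mathsf{is\text{-}expr}^\beta\,\mathbf A_\epsilon)=\mathrm T$ then $V_\phi([\![\mathbf A_\epsilon]\!]_\beta)=V_\phi(\mathcal E^{-1}(V_\phi(\mathbf A_\epsilon)))$; (V7) for each $\beta$ there is a fixed $d_\beta\in D_\beta$ such that $V_\phi([\![\mathbf A_\epsilon]\!]_\beta)=d_\beta$ whenever $V_\phi(\mathsf{is\text{-}expr}^\beta\,\mathbf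 A_\epsilon)=\mathrm F$. $\mathcal M\models\mathbf A_o$ ($\mathbf A_o$ valid in $\mathcal M$) iff $V_\phi(\mathbf A_o)=\mathrm T$ for all $\phi$; $\models\mathbf A_o$ (valid in CTT$_{\rm qe}$) iff valid in every general model. A standard model is an interpretation in which every $D_{\alpha\to\beta}$ is the set of all total functions $D_\alpha\to D_\beta$. *)

theory Defs
  imports Main
begin

datatype ty = Iota | Omicron | Epsilon | Fun ty ty

datatype 'c con =
    CEq ty | CIsVar | CIsVarT ty | CIsCon | CIsConT ty
  | CApp | CAbs | CQuo | CIsExpr | CIsExprT ty | CSub | CIsFreeIn
  | CUser 'c ty

fun ctype :: "'c con \<Rightarrow> ty" where
  "ctype (CEq a) = Fun a (Fun a Omicron)"
| "ctype CIsVar = Fun Epsilon Omicron"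
| "ctype (CIsVarT a) = Fun Epsilon Omicron"
| "ctype CIsCon = Fun Epsilon Omicron"
| "ctype (CIsConT a) = Fun Epsilon Omicron"
| "ctype CApp = Fun Epsilon (Fun Epsilon Epsilon)"
| "ctype CAbs = Fun Epsilon (Fun Epsilon Epsilon)"
| "ctype CQuo = Fun Epsilon Epsilon"
| "ctype CIsExpr = Fun Epsilon Omicron"
| "ctype (CIsExprT a) = Fun Epsilon Omicron"
| "ctype CSub = Fun Epsilon (Fun Epsilon Omicron)"
| "ctype CIsFreeIn = Fun Epsilon (Fun Epsilon Omicron)"
| "ctype (CUser c a) = a"

text \<open>Raw expressions. A variable is a name (nat) together with its type.
  Evaluation [[A]]_B is represented by Eval A \<beta>, since B only fixes the type \<beta>.\<close>
datatype 'c expr =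
    Var nat ty
  | Con "'c con"
  | Ap "'c expr" "'c expr"
  | Lam nat ty "'c expr"
  | Quote "'c expr"
  | Eval "'c expr" ty

fun evalfree :: "'c expr \<Rightarrow> bool" where
  "evalfree (Var x a) = True"
| "evalfree (Con c) = True"
| "evalfree (Ap f a) = (evalfree f \<and> evalfree a)"
| "evalfree (Lam x a b) = evalfree b"
| "evalfree (Quote a) = evalfree a"
| "evalfree (Eval a b) = False"

inductive wt :: "'c expr \<Rightarrow> ty \<Rightarrow> bool" where
  wt_var: "wt (Var x a) a"
| wt_con: "wt (Con c) (ctype c)"
| wt_ap: "wt F (Fun a b) \<Longrightarrow> wt A a \<Longrightarrow> wt (Ap F A) b"
| wt_lam: "wt B b \<Longrightarrow> wt (Lam x a B) (Fun a b)"
| wt_quote: "wt A a \<Longrightarrow> evalfree A \<Longrightarrow> wt (Quote A) Epsilon"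
| wt_eval: "wt A Epsilon \<Longrightarrow> wt (Eval A b) b"

text \<open>Free occurrence of x_\<alpha> (meaningful for eval-free expressions).\<close>
fun free :: "nat \<Rightarrow> ty \<Rightarrow> 'c expr \<Rightarrow> bool" where
  "free x a (Var y b) = (x = y \<and> a = b)"
| "free x a (Con c) = False"
| "free x a (Ap F A) = (free x a F \<or> free x a A)"
| "free x a (Lam y b B) = (\<not> (x = y \<and> a = b) \<and> free x a B)"
| "free x a (Quote A) = False"
| "free x a (Eval A b) = False"

fun subexprs :: "'c expr \<Rightarrow> 'c expr set" where
  "subexprs (Var x a) = {Var x a}"
| "subexprs (Con c) = {Con c}"
| "subexprs (Ap F A) = insert (Ap F A) (subexprs F \<union> subexprs A)"
| "subexprs (Lam x a B) = insert (Lam x a B) (insert (Var x a) (subexprs B))"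
| "subexprs (Quote A) = insert (Quote A) (subexprs A)"
| "subexprs (Eval A b) = insert (Eval A b) (subexprs A)"

definition proper_subexpr :: "'c expr \<Rightarrow> 'c expr \<Rightarrow> bool" where
  "proper_subexpr A B \<longleftrightarrow> A \<in> subexprs B \<and> A \<noteq> B"

inductive_set constructions :: "'c expr set" where
  "Quote (Var x a) \<in> constructions"
| "Quote (Con c) \<in> constructions"
| "A \<in> constructions \<Longrightarrow> B \<in> constructions \<Longrightarrow> Ap (Ap (Con CApp) A) B \<in> constructions"
| "A \<in> constructions \<Longrightarrow> B \<in> constructions \<Longrightarrow> Ap (Ap (Con CAbs) A) B \<in> constructions"
| "A \<in> constructions \<Longrightarrow> Ap (Con CQuo) A \<in> constructions"

fun E :: "'c expr \<Rightarrow> 'c expr" where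
  "E (Var x a) = Quote (Var x a)"
| "E (Con c) = Quote (Con c)"
| "E (Ap F A) = Ap (Ap (Con CApp) (E F)) (E A)"
| "E (Lam x a B) = Ap (Ap (Con CAbs) (Quote (Var x a))) (E B)"
| "E (Quote A) = Ap (Con CQuo) (E A)"
| "E (Eval A b) = undefined"

text \<open>Function domains D (Fun a b) are represented
  extensionally: an element f acts as the function (mAp f) on D a (Henkin applicative
  structure with extensionality).\<close>
record ('c, 'u) model =
  mD :: "ty \<Rightarrow> 'u set"
  mAp :: "'u \<Rightarrow> 'u \<Rightarrow> 'u"
  mBool :: "bool \<Rightarrow> 'u"
  mCons :: "'c expr \<Rightarrow> 'u"
  mI :: "'c con \<Rightarrow> 'u"

definition frame :: "('c, 'u) model \<Rightarrow> bool" where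
  "frame M \<longleftrightarrow>
     mD M Iota \<noteq> {} \<and>
     inj (mBool M) \<and> mD M Omicron = range (mBool M) \<and>
     inj_on (mCons M) constructions \<and> mD M Epsilon = mCons M ` constructions \<and>
     (\<forall>a b f x. f \<in> mD M (Fun a b) \<longrightarrow> x \<in> mD M a \<longrightarrow> mAp M f x \<in> mD M b) \<and>
     (\<forall>a b f g. f \<in> mD M (Fun a b) \<longrightarrow> g \<in> mD M (Fun a b) \<longrightarrow>
        (\<forall>x \<in> mD M a. mAp M f x = mAp M g x) \<longrightarrow> f = g)"

definition is_interpretation :: "('c, 'u) model \<Rightarrow> bool" where
  "is_interpretation M \<longleftrightarrow> frame M \<and>
     (\<forall>c. mI M c \<in> mD M (ctype c)) \<and>
     (\<forall>a. \<forall>x \<in> mD M a. \<forall>y \<in> mD M a.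
        mAp M (mAp M (mI M (CEq a)) x) y = mBool M (x = y)) \<and>
     (\<forall>A \<in> constructions.
        mAp M (mI M CIsVar) (mCons M A) = mBool M (\<exists>x b. A = Quote (Var x b)) \<and>
        (\<forall>a. mAp M (mI M (CIsVarT a)) (mCons M A) = mBool M (\<exists>x. A = Quote (Var x a))) \<and>
        mAp M (mI M CIsCon) (mCons M A) = mBool M (\<exists>c. A = Quote (Con c)) \<and>
        (\<forall>a. mAp M (mI M (CIsConT a)) (mCons M A) =
               mBool M (\<exists>c. ctype c = a \<and> A = Quote (Con c))) \<and>
        mAp M (mI M CQuo) (mCons M A) = mCons M (Ap (Con CQuo) A) \<and>
        mAp M (mI M CIsExpr) (mCons M A) =
          mBool M (\<exists>B b. evalfree B \<and> wt B b \<and> A = E B) \<and>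
        (\<forall>a. mAp M (mI M (CIsExprT a)) (mCons M A) =
               mBool M (\<exists>B. evalfree B \<and> wt B a \<and> A = E B)) \<and>
        (\<forall>B \<in> constructions.
           mAp M (mAp M (mI M CApp) (mCons M A)) (mCons M B) =
             mCons M (Ap (Ap (Con CApp) A) B) \<and>
           mAp M (mAp M (mI M CAbs) (mCons M A)) (mCons M B) =
             mCons M (Ap (Ap (Con CAbs) A) B) \<and>
           mAp M (mAp M (mI M CSub) (mCons M A)) (mCons M B) =
             mBool M (proper_subexpr A B) \<and>
           mAp M (mAp M (mI M CIsFreeIn) (mCons M A)) (mCons M B) =
             mBool M (\<exists>x a C c. A = Quote (Var x a) \<and> evalfree C \<and> wt C c \<and>
                                B = E C \<and> free x a C)))"

definition assignment :: "('c, 'u) model \<Rightarrow> (nat \<times> ty \<Rightarrow> 'u) \<Rightarrow> bool" where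
  "assignment M \<phi> \<longleftrightarrow> (\<forall>x a. \<phi> (x, a) \<in> mD M a)"

text \<open>V is a valuation for M (conditions V1--V7), with d the fixed default values of V7.\<close>
definition valuation ::
  "('c, 'u) model \<Rightarrow> ((nat \<times> ty \<Rightarrow> 'u) \<Rightarrow> 'c expr \<Rightarrow> 'u) \<Rightarrow> (ty \<Rightarrow> 'u) \<Rightarrow> bool" where
  "valuation M V d \<longleftrightarrow>
     (\<forall>b. d b \<in> mD M b) \<and>
     (\<forall>\<phi>. assignment M \<phi> \<longrightarrow>
        (\<forall>C c. wt C c \<longrightarrow> V \<phi> C \<in> mD M c) \<and>
        (\<forall>x a. V \<phi> (Var x a) = \<phi> (x, a)) \<and>
        (\<forall>c. V \<phi> (Con c) = mI M c) \<and>
        (\<forall>F A a b. wt F (Fun a b) \<longrightarrow> wt A a \<longrightarrow>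
           V \<phi> (Ap F A) = mAp M (V \<phi> F) (V \<phi> A)) \<and>
        (\<forall>x a B b. wt B b \<longrightarrow>
           (\<forall>e \<in> mD M a. mAp M (V \<phi> (Lam x a B)) e = V (\<phi>((x, a) := e)) B)) \<and>
        (\<forall>A a. wt A a \<longrightarrow> evalfree A \<longrightarrow> V \<phi> (Quote A) = mCons M (E A)) \<and>
        (\<forall>A b. wt A Epsilon \<longrightarrow>
           V \<phi> (Ap (Con (CIsExprT b)) A) = mBool M True \<longrightarrow>
           V \<phi> (Eval A b) = V \<phi> (THE B. evalfree B \<and> mCons M (E B) = V \<phi> A)) \<and>
        (\<forall>A b. wt A Epsilon \<longrightarrow>
           V \<phi> (Ap (Con (CIsExprT b)) A) = mBool M False \<longrightarrow>
           V \<phi> (Eval A b) = d b))"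

definition general_model :: "('c, 'u) model \<Rightarrow> bool" where
  "general_model M \<longleftrightarrow> is_interpretation M \<and> (\<exists>V d. valuation M V d)"

text \<open>Validity in M (the valuation of a general model is unique, so quantifying over all
  valuations is the same as using the valuation of M).\<close>
definition valid_in :: "('c, 'u) model \<Rightarrow> 'c expr \<Rightarrow> bool" where
  "valid_in M A \<longleftrightarrow>
     (\<forall>V d. valuation M V d \<longrightarrow> (\<forall>\<phi>. assignment M \<phi> \<longrightarrow> V \<phi> A = mBool M True))"

definition eq_expr :: "ty \<Rightarrow> 'c expr \<Rightarrow> 'c expr \<Rightarrow> 'c expr" where
  "eq_expr a A B = Ap (Ap (Con (CEq a)) A) B"

end

theory Submission
  imports Defs
begin

text \<open>Both sides denote functions on the domain of \<open>\<beta>\<close>, so by extensionality it suffices to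
  compare them at an arbitrary \<open>e\<close>. Evaluating the beta-redexes, the left side is \<open>B\<close> under
  \<open>x := V A, y := e\<close>, the right side is \<open>B\<close> under \<open>y := e, x := V' A\<close>, where \<open>V'\<close> evaluates under
  \<open>y := e\<close>. If \<open>y\<close> is not free in the eval-free \<open>A\<close>, then \<open>V' A = V A\<close> and the updates commute;
  if \<open>x\<close> is not free in the eval-free \<open>B\<close>, both sides equal \<open>B\<close> under \<open>y := e\<close> alone. Both cases
  rest on the coincidence lemma, which needs eval-freeness: the value of an evaluation need not
  depend only on the free variables.\<close>

lemmas valuation_assignmentD = valuation_def[THEN iffD1, THEN conjunct2, rule_format]

lemma valuation_wt:
  "valuation M V d \<Longrightarrow> assignment M \<phi> \<Longrightarrow> wt C c \<Longrightarrow> V \<phi> C \<in> mD M c"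
  by (drule (1) valuation_assignmentD) blast

lemma valuation_Var:
  "valuation M V d \<Longrightarrow> assignment M \<phi> \<Longrightarrow> V \<phi> (Var x a) = \<phi> (x, a)"
  by (drule (1) valuation_assignmentD) blast

lemma valuation_Con:
  "valuation M V d \<Longrightarrow> assignment M \<phi> \<Longrightarrow> V \<phi> (Con c) = mI M c"
  by (drule (1) valuation_assignmentD) blast

lemma valuation_Ap:
  "valuation M V d \<Longrightarrow> assignment M \<phi> \<Longrightarrow> wt F (Fun a b) \<Longrightarrow> wt A a \<Longrightarrow>
   V \<phi> (Ap F A) = mAp M (V \<phi> F) (V \<phi> A)"
  by (drule (1) valuation_assignmentD) blast

lemma valuation_Lam:
  "valuation M V d \<Longrightarrow> assignment M \<phi> \<Longrightarrow> wt B b \<Longrightarrow> e \<in> mD M a \<Longrightarrow>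
   mAp M (V \<phi> (Lam x a B)) e = V (\<phi>((x, a) := e)) B"
  by (drule (1) valuation_assignmentD) blast

lemma valuation_Quote:
  "valuation M V d \<Longrightarrow> assignment M \<phi> \<Longrightarrow> wt A a \<Longrightarrow> evalfree A \<Longrightarrow>
   V \<phi> (Quote A) = mCons M (E A)"
  by (drule (1) valuation_assignmentD) blast

lemma frame_ext:
  "frame M \<Longrightarrow> f \<in> mD M (Fun a b) \<Longrightarrow> g \<in> mD M (Fun a b) \<Longrightarrow>
   (\<And>e. e \<in> mD M a \<Longrightarrow> mAp M f e = mAp M g e) \<Longrightarrow> f = g"
  unfolding frame_def by blast

lemma interpretation_CEq:
  "is_interpretation M \<Longrightarrow> u \<in> mD M a \<Longrightarrow> v \<in> mD M a \<Longrightarrow>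
   mAp M (mAp M (mI M (CEq a)) u) v = mBool M (u = v)"
  unfolding is_interpretation_def by blast

lemma assignment_upd:
  "assignment M \<phi> \<Longrightarrow> e \<in> mD M a \<Longrightarrow> assignment M (\<phi>((x, a) := e))"
  unfolding assignment_def by auto

lemma valuation_cong_free:
  assumes val: "valuation M V d" and fr: "frame M"
    and "wt C c" "evalfree C" "assignment M \<phi>" "assignment M \<psi>"
    and "\<And>z b. free z b C \<Longrightarrow> \<phi> (z, b) = \<psi> (z, b)"
  shows "V \<phi> C = V \<psi> C"
  using assms(3-)
proof (induction C c arbitrary: \<phi> \<psi> rule: wt.induct)
  case (wt_var x a)
  then show ?case using valuation_Var[OF val] by simp
next
  case (wt_con c)
  then show ?case using valuation_Con[OF val] by simp
next
  case (wt_ap F a b A)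
  have "V \<phi> F = V \<psi> F" and "V \<phi> A = V \<psi> A"
    using wt_ap.prems by (intro wt_ap.IH; auto)+
  then show ?case
    using valuation_Ap[OF val wt_ap.prems(2) wt_ap.hyps] valuation_Ap[OF val wt_ap.prems(3) wt_ap.hyps]
    by simp
next
  case (wt_lam B b x a)
  have wt_Lam: "wt (Lam x a B) (Fun a b)" using wt_lam.hyps by (rule wt.wt_lam)
  show ?case
  proof (rule frame_ext[OF fr valuation_wt[OF val _ wt_Lam] valuation_wt[OF val _ wt_Lam]])
    fix e assume e: "e \<in> mD M a"
    have "V (\<phi>((x, a) := e)) B = V (\<psi>((x, a) := e)) B"
      using wt_lam.prems by (intro wt_lam.IH assignment_upd e) auto
    then show "mAp M (V \<phi> (Lam x a B)) e = mAp M (V \<psi> (Lam x a B)) e"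
      using wt_lam.hyps wt_lam.prems e by (simp add: valuation_Lam[OF val])
  qed (fact wt_lam.prems)+
next
  case (wt_quote A a)
  then show ?case by (simp add: valuation_Quote[OF val])
next
  case (wt_eval A b)
  then show ?case by simp
qed

lemma valuation_upd_not_free:
  assumes "valuation M V d" "frame M" "wt C c" "evalfree C" "\<not> free z b C"
    and "assignment M \<phi>" "e \<in> mD M b"
  shows "V (\<phi>((z, b) := e)) C = V \<phi> C"
  using assms(5)
  by (intro valuation_cong_free[OF assms(1-4) assignment_upd[OF assms(6,7)] assms(6)]) auto

lemma valuation_beta:
  assumes "valuation M V d" "assignment M \<phi>" "wt B b" "wt A a"
  shows "V \<phi> (Ap (Lam x a B) A) = V (\<phi>((x, a) := V \<phi> A)) B"
proof -
  have "V \<phi> (Ap (Lam x a B) A) = mAp M (V \<phi> (Lam x a B)) (V \<phi> A)"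
    by (rule valuation_Ap[OF assms(1,2) wt.wt_lam[OF assms(3)] assms(4)])
  also have "\<dots> = V (\<phi>((x, a) := V \<phi> A)) B"
    by (rule valuation_Lam[OF assms(1-3) valuation_wt[OF assms(1,2,4)]])
  finally show ?thesis .
qed

lemma valid_in_eq_exprI:
  assumes "general_model M" "wt L a" "wt R a"
    and "\<And>V d \<phi>. valuation M V d \<Longrightarrow> assignment M \<phi> \<Longrightarrow> V \<phi> L = V \<phi> R"
  shows "valid_in M (eq_expr a L R)"
  unfolding valid_in_def eq_expr_def
proof (intro allI impI)
  fix V d \<phi> assume val: "valuation M V d" and as: "assignment M \<phi>"
  have interp: "is_interpretation M" using assms(1) unfolding general_model_def by blast
  have wt_CEq: "wt (Con (CEq a)) (Fun a (Fun a Omicron))"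
    using wt.wt_con[of "CEq a"] by simp
  have wt_CEq_L: "wt (Ap (Con (CEq a)) L) (Fun a Omicron)"
    using wt_CEq assms(2) by (rule wt.wt_ap)
  have "V \<phi> (Ap (Ap (Con (CEq a)) L) R) = mAp M (V \<phi> (Ap (Con (CEq a)) L)) (V \<phi> R)"
    using valuation_Ap[OF val as wt_CEq_L assms(3)] .
  also have "\<dots> = mAp M (mAp M (mI M (CEq a)) (V \<phi> L)) (V \<phi> R)"
    using valuation_Ap[OF val as wt_CEq assms(2)] valuation_Con[OF val as] by simp
  also have "\<dots> = mBool M (V \<phi> L = V \<phi> R)"
    using interpretation_CEq[OF interp] valuation_wt[OF val as] assms(2,3) by blast
  finally have "V \<phi> (Ap (Ap (Con (CEq a)) L) R) = mBool M (V \<phi> L = V \<phi> R)" .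
  then show "V \<phi> (Ap (Ap (Con (CEq a)) L) R) = mBool M True"
    using assms(4)[OF val as] by simp
qed

lemma valuation_Lam_Ap_commute:
  assumes val: "valuation M V d" and fr: "frame M" and as: "assignment M \<phi>"
    and xy: "(x, \<alpha>) \<noteq> (y, \<beta>)" and A: "wt A \<alpha>" and B: "wt B \<gamma>"
    and "(evalfree A \<and> \<not> free y \<beta> A) \<or> (evalfree B \<and> \<not> free x \<alpha> B)"
  shows "V \<phi> (Ap (Lam x \<alpha> (Lam y \<beta> B)) A) = V \<phi> (Lam y \<beta> (Ap (Lam x \<alpha> B) A))"
proof (rule frame_ext[OF fr])
  show "V \<phi> (Ap (Lam x \<alpha> (Lam y \<beta> B)) A) \<in> mD M (Fun \<beta> \<gamma>)"
    and "V \<phi> (Lam y \<beta> (Ap (Lam x \<alpha> B) A)) \<in> mD M (Fun \<beta> \<gamma>)"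
    using A B by (auto intro!: valuation_wt[OF val as] wt.intros)
next
  fix e assume e: "e \<in> mD M \<beta>"
  let ?\<phi>\<^sub>y = "\<phi>((y, \<beta>) := e)"
  have as\<^sub>y: "assignment M ?\<phi>\<^sub>y" using as e by (rule assignment_upd)
  have a: "V \<phi> A \<in> mD M \<alpha>" and a\<^sub>y: "V ?\<phi>\<^sub>y A \<in> mD M \<alpha>"
    using valuation_wt[OF val _ A] as as\<^sub>y by auto
  have lhs: "mAp M (V \<phi> (Ap (Lam x \<alpha> (Lam y \<beta> B)) A)) e
      = V (\<phi>((x, \<alpha>) := V \<phi> A, (y, \<beta>) := e)) B"
    using valuation_beta[OF val as wt.wt_lam[OF B] A]
      valuation_Lam[OF val assignment_upd[OF as a] B e] by simp
  have rhs: "mAp M (V \<phi> (Lam y \<beta> (Ap (Lam x \<alpha> B) A))) e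
      = V (?\<phi>\<^sub>y((x, \<alpha>) := V ?\<phi>\<^sub>y A)) B"
    using valuation_Lam[OF val as wt.wt_ap[OF wt.wt_lam[OF B] A] e]
      valuation_beta[OF val as\<^sub>y B A] by simp
  from assms(7) show "mAp M (V \<phi> (Ap (Lam x \<alpha> (Lam y \<beta> B)) A)) e
      = mAp M (V \<phi> (Lam y \<beta> (Ap (Lam x \<alpha> B) A))) e"
  proof
    assume "evalfree A \<and> \<not> free y \<beta> A"
    then have "V ?\<phi>\<^sub>y A = V \<phi> A"
      using valuation_upd_not_free[OF val fr A _ _ as e] by blast
    then show ?thesis using lhs rhs xy by (simp add: fun_upd_twist)
  next
    assume "evalfree B \<and> \<not> free x \<alpha> B"
    then have upd_x: "\<And>u. u \<in> mD M \<alpha> \<Longrightarrow> V (?\<phi>\<^sub>y((x, \<alpha>) := u)) B = V ?\<phi>\<^sub>y B"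
      using valuation_upd_not_free[OF val fr B _ _ as\<^sub>y] by blast
    have "V (\<phi>((x, \<alpha>) := V \<phi> A, (y, \<beta>) := e)) B = V (?\<phi>\<^sub>y((x, \<alpha>) := V \<phi> A)) B"
      using xy by (simp add: fun_upd_twist)
    also have "\<dots> = V (?\<phi>\<^sub>y((x, \<alpha>) := V ?\<phi>\<^sub>y A)) B"
      using upd_x[OF a] upd_x[OF a\<^sub>y] by simp
    finally show ?thesis using lhs rhs by simp
  qed
qed

theorem mainTheorem13:
  fixes M :: "('c, 'u) model" and A B :: "'c expr"
    and x y :: nat and \<alpha> \<beta> \<gamma> :: ty
  assumes "general_model M"
    and "(x, \<alpha>) \<noteq> (y, \<beta>)"
    and "wt A \<alpha>" and "wt B \<gamma>"
    and "(evalfree A \<and> \<not> free y \<beta> A) \<or> (evalfree B \<and> \<not> free x \<alpha> B)"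
  shows "valid_in M
           (eq_expr (Fun \<beta> \<gamma>) (Ap (Lam x \<alpha> (Lam y \<beta> B)) A)
                               (Lam y \<beta> (Ap (Lam x \<alpha> B) A)))"
proof (rule valid_in_eq_exprI[OF assms(1)])
  show "wt (Ap (Lam x \<alpha> (Lam y \<beta> B)) A) (Fun \<beta> \<gamma>)"
    and "wt (Lam y \<beta> (Ap (Lam x \<alpha> B) A)) (Fun \<beta> \<gamma>)"
    using assms(3,4) by (auto intro!: wt.intros)
  have fr: "frame M" using assms(1) unfolding general_model_def is_interpretation_def by blast
  show "\<And>V d \<phi>. valuation M V d \<Longrightarrow> assignment M \<phi> \<Longrightarrow>
      V \<phi> (Ap (Lam x \<alpha> (Lam y \<beta> B)) A) = V \<phi> (Lam y \<beta> (Ap (Lam x \<alpha> B) A))"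
    by (rule valuation_Lam_Ap_commute[OF _ fr _ assms(2-5)])
qed

end
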